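(* Let $n\geq 2$ be an integer, let $\mathcal{F}=(W,R)$ be a finite transitive frame and let $X_\mathcal{F}$ be constructed as described in the context. If $X_C$ is hereditarily $n$-irresolvable for every cluster $C$ of $\mathcal{F}$, then $X_\mathcal{F}$ is hereditarily $n$-irresolvable.
   Context: A space $X$ is $k$-resolvable ($k\ge 2$) if it has $k$ pairwise disjoint non-empty dense subsets, $k$-irresolvable otherwise, and hereditarily $k$-irresolvable if every non-empty subspace is $k$-irresolvable. For $Y\subseteq X$, $\mathrm{d}_XY$ is the set of limit points of $Y$; $S$ is crowded in $X$ if $S\subseteq\mathrm{d}_XS$. A partition is dense (resp. crowded) if all its cells are dense (resp. crowded). For a transitive frame $(W,R)$: clusters are equivalence classes of $\{(x,y):x=y\text{ or }xRyRx\}$; the cluster of $x$ is degenerate if $x$ is irreflexive (then it is $\{x\}$), non-degenerate otherwise; $CRC'$ for clusters iff $xRy$ for representatives; $CR^\uparrow C'$ means $CRC'$ and not $C'RC$. Construction of $X_\mathcal{F}$: let $\mathscr{C}$ be the set of clusters of the finite transitive frame $\mathcal{F}$. For each $C\in\mathscr{C}$ choose a space $X_C$ with a partition $\{X_w:w\in C\}$: if $C=\{w\}$ is degenerate, $X_C=X_w=\{w\}$; if $C=\{w_1,\dots,w_k\}$ is non-degenerate, $X_C$ is a space with a crowded dense $k$-partition with cells labelled $X_{w_1},\dots,X_{w_k}$. The $X_C$ are pairwise disjoint. $X_\mathcal{F}=\bigcup_{C}X_C$, where $O\subseteq X_\mathcal{F}$ is open iff for every $C$, $O\cap X_C$ is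 open in $X_C$, and if $O\cap X_C\ne\emptyset$ then $X_{C'}\subseteq O$ for all $C'$ with $CR^\uparrow C'$. *)

theory Defs
  imports "HOL-Analysis.Analysis"
begin

definition dense_in :: "'a topology \<Rightarrow> 'a set \<Rightarrow> bool" where
  "dense_in X D \<longleftrightarrow> D \<subseteq> topspace X \<and> X closure_of D = topspace X"

definition crowded_in :: "'a topology \<Rightarrow> 'a set \<Rightarrow> bool" where
  "crowded_in X S \<longleftrightarrow> S \<subseteq> X derived_set_of S"

definition resolvable :: "nat \<Rightarrow> 'a topology \<Rightarrow> bool" where
  "resolvable k X \<longleftrightarrow>
     (\<exists>D :: nat \<Rightarrow> 'a set. (\<forall>i<k. D i \<noteq> {} \<and> dense_in X (D i)) \<and> disjoint_family_on D {..<k})"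

definition hered_irresolvable :: "nat \<Rightarrow> 'a topology \<Rightarrow> bool" where
  "hered_irresolvable k X \<longleftrightarrow>
     (\<forall>Y. Y \<subseteq> topspace X \<and> Y \<noteq> {} \<longrightarrow> \<not> resolvable k (subtopology X Y))"

definition frame :: "'w set \<Rightarrow> ('w \<Rightarrow> 'w \<Rightarrow> bool) \<Rightarrow> bool" where
  "frame W R \<longleftrightarrow> (\<forall>x y. R x y \<longrightarrow> x \<in> W \<and> y \<in> W)"

definition transitive_on :: "'w set \<Rightarrow> ('w \<Rightarrow> 'w \<Rightarrow> bool) \<Rightarrow> bool" where
  "transitive_on W R \<longleftrightarrow> (\<forall>x\<in>W. \<forall>y\<in>W. \<forall>z\<in>W. R x y \<longrightarrow> R y z \<longrightarrow> R x z)"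

definition cluster_rel :: "'w set \<Rightarrow> ('w \<Rightarrow> 'w \<Rightarrow> bool) \<Rightarrow> ('w \<times> 'w) set" where
  "cluster_rel W R = {(x, y). x \<in> W \<and> y \<in> W \<and> (x = y \<or> (R x y \<and> R y x))}"

definition clusters :: "'w set \<Rightarrow> ('w \<Rightarrow> 'w \<Rightarrow> bool) \<Rightarrow> 'w set set" where
  "clusters W R = W // cluster_rel W R"

definition clR :: "('w \<Rightarrow> 'w \<Rightarrow> bool) \<Rightarrow> 'w set \<Rightarrow> 'w set \<Rightarrow> bool" where
  "clR R C C' \<longleftrightarrow> (\<exists>x\<in>C. \<exists>y\<in>C'. R x y)"

definition clR_up :: "('w \<Rightarrow> 'w \<Rightarrow> bool) \<Rightarrow> 'w set \<Rightarrow> 'w set \<Rightarrow> bool" where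
  "clR_up R C C' \<longleftrightarrow> clR R C C' \<and> \<not> clR R C' C"

definition degenerate :: "('w \<Rightarrow> 'w \<Rightarrow> bool) \<Rightarrow> 'w set \<Rightarrow> bool" where
  "degenerate R C \<longleftrightarrow> (\<exists>w. C = {w} \<and> \<not> R w w)"

text \<open>Given spaces XC C (for clusters C) whose points are labelled by lab (the point x lies
  in the cell X_(lab x)), the admissible family for the construction.\<close>
definition admissible_family ::
  "'w set \<Rightarrow> ('w \<Rightarrow> 'w \<Rightarrow> bool) \<Rightarrow> ('w set \<Rightarrow> 'a topology) \<Rightarrow> ('a \<Rightarrow> 'w) \<Rightarrow> bool" where
  "admissible_family W R XC lab \<longleftrightarrow>
     (\<forall>C\<in>clusters W R. (\<forall>x\<in>topspace (XC C). lab x \<in> C) \<and>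
        (if degenerate R C then (\<exists>a. topspace (XC C) = {a})
         else (\<forall>w\<in>C. {x \<in> topspace (XC C). lab x = w} \<noteq> {} \<and>
                      dense_in (XC C) {x \<in> topspace (XC C). lab x = w} \<and>
                      crowded_in (XC C) {x \<in> topspace (XC C). lab x = w})))"

definition XF :: "'w set \<Rightarrow> ('w \<Rightarrow> 'w \<Rightarrow> bool) \<Rightarrow> ('w set \<Rightarrow> 'a topology) \<Rightarrow> 'a topology" where
  "XF W R XC = topology (\<lambda>U. U \<subseteq> (\<Union>C\<in>clusters W R. topspace (XC C)) \<and>
      (\<forall>C\<in>clusters W R. openin (XC C) (U \<inter> topspace (XC C)) \<and>
         (U \<inter> topspace (XC C) \<noteq> {} \<longrightarrow>
            (\<forall>C'\<in>clusters W R. clR_up R C C' \<longrightarrow> topspace (XC C') \<subseteq> U))))"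

end

theory Submission
  imports Defs
begin

text \<open>
  Let \<open>Y\<close> be a non-empty subspace of \<open>X\<^sub>F\<close>. Since the frame is finite, some cluster \<open>C\<close>
  whose space meets \<open>Y\<close> is maximal for \<open>R\<^sup>\<up>\<close> among the clusters with this property. The set
  \<open>X\<^sub>C \<union> \<Union>{X\<^sub>C\<^sub>' | C R\<^sup>\<up> C'}\<close> is open in \<open>X\<^sub>F\<close>, and by maximality its trace on \<open>Y\<close> is
  \<open>Y \<inter> X\<^sub>C\<close>, a non-empty open subset of \<open>Y\<close>. Resolvability passes to non-empty open subspaces,
  and \<open>X\<^sub>C\<close> carries its own topology as a subspace of \<open>X\<^sub>F\<close>; so a resolution of \<open>Y\<close> would
  resolve the subspace \<open>Y \<inter> X\<^sub>C\<close> of \<open>X\<^sub>C\<close>.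
\<close>

lemma dense_in_subtopology_openin_Int:
  assumes "openin X U" "dense_in X D"
  shows "dense_in (subtopology X U) (D \<inter> U)"
proof -
  have "subtopology X U closure_of (D \<inter> U) = U \<inter> X closure_of (D \<inter> U)"
    using assms(1) by (rule closure_of_subtopology_open[OF disjI1])
  also have "\<dots> = U \<inter> X closure_of D"
    using openin_Int_closure_of_eq[OF assms(1), of D] by (simp add: Int_commute)
  also have "\<dots> = U"
    using assms(2) openin_subset[OF assms(1)] by (auto simp: dense_in_def)
  finally show ?thesis
    using assms(2) openin_subset[OF assms(1)] by (auto simp: dense_in_def)
qed

lemma resolvable_subtopology_openin:
  assumes "resolvable k X" "openin X U" "U \<noteq> {}"
  shows "resolvable k (subtopology X U)"
proof -
  obtain D where D: "\<And>i. i < k \<Longrightarrow> D i \<noteq> {} \<and> dense_in X (D i)"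
    and disj: "disjoint_family_on D {..<k}"
    using assms(1) unfolding resolvable_def by blast
  show ?thesis
    unfolding resolvable_def
  proof (intro exI[of _ "\<lambda>i. D i \<inter> U"] conjI allI impI)
    fix i assume "i < k"
    then have "X closure_of D i = topspace X"
      using D by (simp add: dense_in_def)
    then show "D i \<inter> U \<noteq> {}"
      using assms(2,3) by (simp add: dense_intersects_open)
    show "dense_in (subtopology X U) (D i \<inter> U)"
      using D[OF \<open>i < k\<close>] assms(2) by (simp add: dense_in_subtopology_openin_Int)
  next
    show "disjoint_family_on (\<lambda>i. D i \<inter> U) {..<k}"
      using disj by (auto simp: disjoint_family_on_def)
  qed
qed

lemma finite_strict_order_has_maximal:
  assumes "finite S" "S \<noteq> {}"
    and irrefl: "\<And>x. x \<in> S \<Longrightarrow> \<not> P x x"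
    and trans: "\<And>x y z. x \<in> S \<Longrightarrow> y \<in> S \<Longrightarrow> z \<in> S \<Longrightarrow> P x y \<Longrightarrow> P y z \<Longrightarrow> P x z"
  obtains x where "x \<in> S" "\<And>y. y \<in> S \<Longrightarrow> \<not> P x y"
proof -
  define r where "r = {(y, x). x \<in> S \<and> y \<in> S \<and> P x y}"
  have "r \<subseteq> S \<times> S"
    by (auto simp: r_def)
  then have "finite r"
    using assms(1) finite_subset by blast
  moreover have "trans r"
    unfolding trans_def r_def using trans by blast
  moreover have "irrefl r"
    unfolding irrefl_def r_def using irrefl by blast
  ultimately have "wf r"
    by (simp add: finite_acyclic_wf acyclic_irrefl trancl_id)
  then obtain x where "x \<in> S" "\<And>y. (y, x) \<in> r \<Longrightarrow> y \<notin> S"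
    using assms(2) by (metis wfE_min equals0I)
  then show thesis
    using that unfolding r_def by blast
qed

lemma finite_clusters: "finite W \<Longrightarrow> finite (clusters W R)"
  unfolding clusters_def by (rule finite_quotient) (auto simp: cluster_rel_def)

context
  fixes W :: "'w set" and R :: "'w \<Rightarrow> 'w \<Rightarrow> bool"
  assumes tr: "transitive_on W R"
begin

lemma equiv_cluster_rel: "equiv W (cluster_rel W R)"
  using tr unfolding equiv_def refl_on_def sym_def trans_def cluster_rel_def transitive_on_def
  by blast

lemma cluster_subset: "C \<in> clusters W R \<Longrightarrow> C \<subseteq> W"
  unfolding clusters_def by (rule in_quotient_imp_subset[OF equiv_cluster_rel])

lemma in_cluster_related:
  assumes "C \<in> clusters W R" "x \<in> C" "y \<in> C"
  shows "x = y \<or> R x y \<and> R y x"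
  using in_quotient_imp_in_rel[OF equiv_cluster_rel, of C x y] assms
  by (auto simp: clusters_def cluster_rel_def)

lemma clR_up_trans:
  assumes C1: "C1 \<in> clusters W R" and C2: "C2 \<in> clusters W R" and C3: "C3 \<in> clusters W R"
    and "clR_up R C1 C2" "clR_up R C2 C3"
  shows "clR_up R C1 C3"
proof -
  have RT: "R x z" if "x \<in> W" "y \<in> W" "z \<in> W" "R x y" "R y z" for x y z
    using tr that unfolding transitive_on_def by blast
  obtain x y where xy: "x \<in> C1" "y \<in> C2" "R x y"
    using \<open>clR_up R C1 C2\<close> unfolding clR_up_def clR_def by blast
  obtain y' z where yz: "y' \<in> C2" "z \<in> C3" "R y' z"
    using \<open>clR_up R C2 C3\<close> unfolding clR_up_def clR_def by blast
  have W: "x \<in> W" "y \<in> W" "y' \<in> W" "z \<in> W"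
    using xy yz cluster_subset[OF C1] cluster_subset[OF C2] cluster_subset[OF C3] by blast+
  have "R x y'"
    using in_cluster_related[OF C2 xy(2) yz(1)] xy(3) RT[of x y y'] W by blast
  then have "R x z"
    using RT[of x y' z] yz(3) W by blast
  moreover have "\<not> clR R C3 C1"
  proof
    assume "clR R C3 C1"
    then obtain z' x' where z'x': "z' \<in> C3" "x' \<in> C1" "R z' x'"
      unfolding clR_def by blast
    have W': "z' \<in> W" "x' \<in> W"
      using z'x' cluster_subset[OF C1] cluster_subset[OF C3] by blast+
    have "R y' z'"
      using in_cluster_related[OF C3 yz(2) z'x'(1)] yz(3) RT[of y' z z'] W W' by blast
    then have "R y' x'"
      using RT[of y' z' x'] z'x'(3) W W' by blast
    then have "clR R C2 C1"
      using yz(1) z'x'(2) unfolding clR_def by blast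
    then show False
      using \<open>clR_up R C1 C2\<close> unfolding clR_up_def by blast
  qed
  ultimately show ?thesis
    using xy(1) yz(2) unfolding clR_up_def clR_def by blast
qed

lemma clusters_have_clR_up_maximal:
  assumes "finite W" "S \<subseteq> clusters W R" "S \<noteq> {}"
  obtains C where "C \<in> S" "\<And>C'. C' \<in> S \<Longrightarrow> \<not> clR_up R C C'"
proof (rule finite_strict_order_has_maximal[of S "clR_up R"])
  show "finite S"
    using finite_clusters[OF assms(1)] assms(2) by (rule finite_subset[rotated])
  show "\<And>C1 C2 C3. C1 \<in> S \<Longrightarrow> C2 \<in> S \<Longrightarrow> C3 \<in> S \<Longrightarrow>
      clR_up R C1 C2 \<Longrightarrow> clR_up R C2 C3 \<Longrightarrow> clR_up R C1 C3"
    using clR_up_trans assms(2) by blast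
qed (use assms(3) that in \<open>auto simp: clR_up_def\<close>)

lemma admissible_family_disjoint_spaces:
  assumes "admissible_family W R XC lab"
  shows "disjoint_family_on (\<lambda>C. topspace (XC C)) (clusters W R)"
  unfolding disjoint_family_on_def
proof (intro ballI impI)
  fix C C' assume C: "C \<in> clusters W R" and C': "C' \<in> clusters W R" and "C \<noteq> C'"
  then have "C \<inter> C' = {}"
    using quotient_disj[OF equiv_cluster_rel] by (auto simp: clusters_def)
  then show "topspace (XC C) \<inter> topspace (XC C') = {}"
    using assms C C' unfolding admissible_family_def by blast
qed

end

definition XF_open :: "'w set \<Rightarrow> ('w \<Rightarrow> 'w \<Rightarrow> bool) \<Rightarrow> ('w set \<Rightarrow> 'a topology) \<Rightarrow> 'a set \<Rightarrow> bool"
  where "XF_open W R XC U \<longleftrightarrow> U \<subseteq> (\<Union>C\<in>clusters W R. topspace (XC C)) \<and>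
      (\<forall>C\<in>clusters W R. openin (XC C) (U \<inter> topspace (XC C)) \<and>
         (U \<inter> topspace (XC C) \<noteq> {} \<longrightarrow>
            (\<forall>C'\<in>clusters W R. clR_up R C C' \<longrightarrow> topspace (XC C') \<subseteq> U)))"

definition XF_up :: "'w set \<Rightarrow> ('w \<Rightarrow> 'w \<Rightarrow> bool) \<Rightarrow> ('w set \<Rightarrow> 'a topology) \<Rightarrow> 'w set \<Rightarrow> 'a set"
  where "XF_up W R XC C = (\<Union>C'\<in>{C' \<in> clusters W R. clR_up R C C'}. topspace (XC C'))"

lemma istopology_XF_open: "istopology (XF_open W R XC)"
  unfolding istopology_def
proof (intro conjI allI impI)
  fix S T assume S: "XF_open W R XC S" and T: "XF_open W R XC T"
  show "XF_open W R XC (S \<inter> T)"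
    unfolding XF_open_def
  proof (intro conjI ballI impI)
    show "S \<inter> T \<subseteq> (\<Union>C\<in>clusters W R. topspace (XC C))"
      using S unfolding XF_open_def by blast
  next
    fix C assume "C \<in> clusters W R"
    then have "openin (XC C) ((S \<inter> topspace (XC C)) \<inter> (T \<inter> topspace (XC C)))"
      using S T unfolding XF_open_def by (blast intro: openin_Int)
    moreover have "(S \<inter> topspace (XC C)) \<inter> (T \<inter> topspace (XC C)) = S \<inter> T \<inter> topspace (XC C)"
      by blast
    ultimately show "openin (XC C) (S \<inter> T \<inter> topspace (XC C))"
      by simp
  next
    fix C C' assume "C \<in> clusters W R" "S \<inter> T \<inter> topspace (XC C) \<noteq> {}"
      and "C' \<in> clusters W R" "clR_up R C C'"
    then show "topspace (XC C') \<subseteq> S \<inter> T"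
      using S T unfolding XF_open_def by blast
  qed
next
  fix K assume K: "\<forall>S\<in>K. XF_open W R XC S"
  show "XF_open W R XC (\<Union>K)"
    unfolding XF_open_def
  proof (intro conjI ballI impI)
    show "\<Union>K \<subseteq> (\<Union>C\<in>clusters W R. topspace (XC C))"
      using K unfolding XF_open_def by blast
  next
    fix C assume "C \<in> clusters W R"
    then have "openin (XC C) (\<Union>S\<in>K. S \<inter> topspace (XC C))"
      using K unfolding XF_open_def by blast
    moreover have "(\<Union>S\<in>K. S \<inter> topspace (XC C)) = \<Union>K \<inter> topspace (XC C)"
      by blast
    ultimately show "openin (XC C) (\<Union>K \<inter> topspace (XC C))"
      by simp
  next
    fix C C' assume "C \<in> clusters W R" "\<Union>K \<inter> topspace (XC C) \<noteq> {}"
      and "C' \<in> clusters W R" "clR_up R C C'"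
    then show "topspace (XC C') \<subseteq> \<Union>K"
      using K unfolding XF_open_def by blast
  qed
qed

lemma openin_XF: "openin (XF W R XC) U \<longleftrightarrow> XF_open W R XC U"
proof -
  have "XF W R XC = topology (XF_open W R XC)"
    by (simp only: XF_def XF_open_def[abs_def])
  then show ?thesis
    by (simp add: topology_inverse'[OF istopology_XF_open])
qed

lemma topspace_XF: "topspace (XF W R XC) = (\<Union>C\<in>clusters W R. topspace (XC C))"
proof (rule subset_antisym)
  show "topspace (XF W R XC) \<subseteq> (\<Union>C\<in>clusters W R. topspace (XC C))"
    using openin_XF[of W R XC "topspace (XF W R XC)"] by (simp add: XF_open_def)
  have "(\<Union>C\<in>clusters W R. topspace (XC C)) \<inter> topspace (XC C) = topspace (XC C)"
    if "C \<in> clusters W R" for C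
    using that by blast
  then have "XF_open W R XC (\<Union>C\<in>clusters W R. topspace (XC C))"
    unfolding XF_open_def by auto
  then show "(\<Union>C\<in>clusters W R. topspace (XC C)) \<subseteq> topspace (XF W R XC)"
    using openin_XF openin_subset by metis
qed

context
  fixes W :: "'w set" and R :: "'w \<Rightarrow> 'w \<Rightarrow> bool" and XC :: "'w set \<Rightarrow> 'a topology"
  assumes tr: "transitive_on W R"
    and disj: "disjoint_family_on (\<lambda>C. topspace (XC C)) (clusters W R)"
begin

lemma XF_up_Int_topspace:
  assumes "C \<in> clusters W R" "D \<in> clusters W R"
  shows "XF_up W R XC C \<inter> topspace (XC D) = (if clR_up R C D then topspace (XC D) else {})"
  using assms disjoint_family_onD[OF disj] unfolding XF_up_def by auto

lemma openin_XF_Un_up: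
  assumes C: "C \<in> clusters W R" and V: "openin (XC C) V"
  shows "openin (XF W R XC) (V \<union> XF_up W R XC C)"
  unfolding openin_XF XF_open_def
proof (intro conjI ballI impI)
  have trace: "(V \<union> XF_up W R XC C) \<inter> topspace (XC D) =
      (if D = C then V else if clR_up R C D then topspace (XC D) else {})"
    if D: "D \<in> clusters W R" for D
    using XF_up_Int_topspace[OF C D] XF_up_Int_topspace[OF C C] openin_subset[OF V]
      disjoint_family_onD[OF disj C D] by (auto simp: clR_up_def)
  show "V \<union> XF_up W R XC C \<subseteq> (\<Union>C\<in>clusters W R. topspace (XC C))"
    using C openin_subset[OF V] by (auto simp: XF_up_def)
  show "openin (XC D) ((V \<union> XF_up W R XC C) \<inter> topspace (XC D))" if "D \<in> clusters W R" for D
    using trace[OF that] V by simp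
  fix D D' assume D: "D \<in> clusters W R" and D': "D' \<in> clusters W R"
    and "(V \<union> XF_up W R XC C) \<inter> topspace (XC D) \<noteq> {}" and "clR_up R D D'"
  then have "clR_up R C D'"
    using trace[OF D] clR_up_trans[OF tr C D D'] by (auto split: if_splits)
  then show "topspace (XC D') \<subseteq> V \<union> XF_up W R XC C"
    using D' by (auto simp: XF_up_def)
qed

lemma subtopology_XF_cluster:
  assumes C: "C \<in> clusters W R"
  shows "subtopology (XF W R XC) (topspace (XC C)) = XC C"
  unfolding topology_eq openin_subtopology
proof (intro allI iffI)
  fix S assume "\<exists>T. openin (XF W R XC) T \<and> S = T \<inter> topspace (XC C)"
  then show "openin (XC C) S"
    using C by (auto simp: openin_XF XF_open_def)
next
  fix S assume S: "openin (XC C) S"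
  then have "S = (S \<union> XF_up W R XC C) \<inter> topspace (XC C)"
    using XF_up_Int_topspace[OF C C] openin_subset by (auto simp: clR_up_def)
  then show "\<exists>T. openin (XF W R XC) T \<and> S = T \<inter> topspace (XC C)"
    using openin_XF_Un_up[OF C S] by blast
qed

end

theorem lemma5:
  fixes n :: nat and W :: "'w set" and R :: "'w \<Rightarrow> 'w \<Rightarrow> bool"
    and XC :: "'w set \<Rightarrow> 'a topology" and lab :: "'a \<Rightarrow> 'w"
  assumes "n \<ge> 2"
    and "finite W" and "frame W R" and "transitive_on W R"
    and "admissible_family W R XC lab"
    and "\<forall>C\<in>clusters W R. hered_irresolvable n (XC C)"
  shows "hered_irresolvable n (XF W R XC)"
  unfolding hered_irresolvable_def
proof (intro allI impI notI)
  fix Y assume Y: "Y \<subseteq> topspace (XF W R XC) \<and> Y \<noteq> {}"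
    and res: "resolvable n (subtopology (XF W R XC) Y)"
  have disj: "disjoint_family_on (\<lambda>C. topspace (XC C)) (clusters W R)"
    using admissible_family_disjoint_spaces[OF assms(4,5)] .
  define S where "S = {C \<in> clusters W R. Y \<inter> topspace (XC C) \<noteq> {}}"
  have "S \<subseteq> clusters W R" "S \<noteq> {}"
    using Y by (auto simp: S_def topspace_XF)
  then obtain C where "C \<in> S" and maximal: "\<And>C'. C' \<in> S \<Longrightarrow> \<not> clR_up R C C'"
    by (rule clusters_have_clR_up_maximal[OF assms(4,2)]) blast
  then have C: "C \<in> clusters W R" and meets: "Y \<inter> topspace (XC C) \<noteq> {}"
    by (auto simp: S_def)
  let ?Z = "Y \<inter> topspace (XC C)"
  have "?Z = (topspace (XC C) \<union> XF_up W R XC C) \<inter> Y"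
    using maximal by (auto simp: S_def XF_up_def)
  then have "openin (subtopology (XF W R XC) Y) ?Z"
    unfolding openin_subtopology using openin_XF_Un_up[OF assms(4) disj C openin_topspace] by blast
  then have "resolvable n (subtopology (subtopology (XF W R XC) Y) ?Z)"
    using resolvable_subtopology_openin[OF res _ meets] by blast
  also have "subtopology (subtopology (XF W R XC) Y) ?Z = subtopology (XC C) ?Z"
    using subtopology_XF_cluster[OF assms(4) disj C]
    by (metis inf.absorb_iff2 inf.cobounded1 inf.cobounded2 subtopology_subtopology)
  finally show False
    using assms(6) C meets unfolding hered_irresolvable_def by blast
qed

end
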